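(* Let $m\ge 3$ be odd. There is no monic polynomial $g\in\mathbb{Z}[X]$ of degree $m$ such that $f(X)=g(X^2)$ is irreducible over $\mathbb{Q}$, monogenic, and has Galois group $\mathrm{Gal}(f/\mathbb{Q})$ isomorphic to the dihedral group $D_m$ of order $2m$ (acting regularly on the $2m$ roots of $f$).
   Context: A monic irreducible polynomial $f\in\mathbb{Z}[X]$ with a root $\alpha$ is called monogenic if $\mathbb{Z}[\alpha]$ equals the full ring of integers of $\mathbb{Q}(\alpha)$. $\mathrm{Gal}(f/\mathbb{Q})$ is the Galois group of the splitting field of $f$ over $\mathbb{Q}$. *)

theory Defs
  imports "HOL-Computational_Algebra.Computational_Algebra" "HOL-Algebra.Group" "HOL-Library.FuncSet" Complex_Main
begin

definition int_poly_roots :: "int poly \<Rightarrow> complex set" where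
  "int_poly_roots f = {z. poly (map_poly of_int f) z = 0}"

definition complex_subfield :: "complex set \<Rightarrow> bool" where
  "complex_subfield K \<longleftrightarrow> 0 \<in> K \<and> 1 \<in> K \<and>
     (\<forall>x\<in>K. \<forall>y\<in>K. x + y \<in> K \<and> x - y \<in> K \<and> x * y \<in> K) \<and>
     (\<forall>x\<in>K. x \<noteq> 0 \<longrightarrow> inverse x \<in> K)"

definition splitting_field :: "int poly \<Rightarrow> complex set" where
  "splitting_field f = \<Inter> {K. complex_subfield K \<and> int_poly_roots f \<subseteq> K}"

text \<open>Field automorphisms of a subfield K (they automatically fix the rationals).\<close>
definition field_auts :: "complex set \<Rightarrow> (complex \<Rightarrow> complex) set" where
  "field_auts K = {\<sigma>. \<sigma> \<in> extensional K \<and> bij_betw \<sigma> K K \<and> \<sigma> 1 = 1 \<and>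
      (\<forall>x\<in>K. \<forall>y\<in>K. \<sigma> (x + y) = \<sigma> x + \<sigma> y \<and> \<sigma> (x * y) = \<sigma> x * \<sigma> y)}"

definition gal_group :: "int poly \<Rightarrow> (complex \<Rightarrow> complex) monoid" where
  "gal_group f = \<lparr>carrier = field_auts (splitting_field f),
                  monoid.mult = (\<lambda>\<sigma> \<tau>. compose (splitting_field f) \<sigma> \<tau>),
                  one = restrict id (splitting_field f)\<rparr>"

text \<open>Dihedral group D_m of order 2m: element (a, s) stands for r^a s^s, with
  r^a s^x * r^b s^y = r^(a + (-1)^x b) s^(x+y).\<close>
definition dihedral_group :: "nat \<Rightarrow> (int \<times> bool) monoid" where
  "dihedral_group m = \<lparr>carrier = {0..<int m} \<times> UNIV,
     monoid.mult = (\<lambda>(a, x) (b, y). ((a + (if x then - b else b)) mod int m, x \<noteq> y)),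
     one = (0, False)\<rparr>"

definition rat_adjoin :: "complex \<Rightarrow> complex set" where
  "rat_adjoin \<alpha> = {poly (map_poly of_rat p) \<alpha> | p :: rat poly. True}"

definition int_adjoin :: "complex \<Rightarrow> complex set" where
  "int_adjoin \<alpha> = {poly (map_poly of_int p) \<alpha> | p :: int poly. True}"

definition monogenic :: "int poly \<Rightarrow> bool" where
  "monogenic f \<longleftrightarrow> lead_coeff f = 1 \<and> irreducible (map_poly of_int f :: rat poly) \<and>
     (\<exists>\<alpha>. poly (map_poly of_int f) \<alpha> = (0::complex) \<and>
          int_adjoin \<alpha> = {x \<in> rat_adjoin \<alpha>. algebraic_int x})"

end

theory Submission
  imports Defs "HOL-Computational_Algebra.Field_as_Ring"
begin

(* Let alpha be a root of f = g(X^2) with Z[alpha] the ring of integers of Q(alpha). Since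
   |Gal(f)| = 2m = deg f, Q(alpha) is the splitting field, an automorphism is determined by its
   value at alpha, and every automorphism maps Z[alpha] to itself. The automorphism
   rho: alpha -> -alpha is the identity on Z[alpha]/2Z[alpha], because p(-alpha) = p(alpha) mod 2.
   As m is odd, rho is a reflection in D_m; for an adjacent reflection tau, r = (rho tau)^2 is a
   nontrivial rotation, so r^m = 1, and r = rho (tau rho tau^-1) is again the identity mod 2.
   Writing r = 1 + 2^j E and expanding r^m = 1 with m odd shows that r is the identity modulo
   every power of 2. Hence r(alpha) - alpha is an algebraic integer of Q(alpha) divisible by all
   powers of 2, so it vanishes and r = 1, a contradiction. *)

lemma map_poly_of_int_add:
  "map_poly (of_int :: int \<Rightarrow> 'a::comm_ring_1) (p + q) = map_poly of_int p + map_poly of_int q"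
  by (intro poly_eqI) (simp add: coeff_map_poly)

lemma map_poly_of_int_diff:
  "map_poly (of_int :: int \<Rightarrow> 'a::comm_ring_1) (p - q) = map_poly of_int p - map_poly of_int q"
  by (intro poly_eqI) (simp add: coeff_map_poly)

lemma map_poly_of_int_mult:
  "map_poly (of_int :: int \<Rightarrow> 'a::comm_ring_1) (p * q) = map_poly of_int p * map_poly of_int q"
proof (induction p)
  case (pCons a p)
  then show ?case
    by (simp add: map_poly_pCons map_poly_of_int_add map_poly_smult[symmetric] smult_conv_map_poly
        map_poly_map_poly o_def)
qed simp

lemma map_poly_of_int_eq_0_iff:
  "map_poly (of_int :: int \<Rightarrow> 'a::ring_char_0) p = 0 \<longleftrightarrow> p = 0"
  by (subst map_poly_eq_0_iff) auto

lemma poly_map_poly_of_int_pcompose: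
  "poly (map_poly (of_int :: int \<Rightarrow> 'a::comm_ring_1) (pcompose p q)) x =
   poly (map_poly of_int p) (poly (map_poly of_int q) x)"
  by (induction p)
    (simp_all add: pcompose_pCons map_poly_pCons map_poly_of_int_add map_poly_of_int_mult)

section \<open>Subfields of the complex numbers\<close>

lemma subfield_0: "complex_subfield K \<Longrightarrow> 0 \<in> K"
  and subfield_1: "complex_subfield K \<Longrightarrow> 1 \<in> K"
  and subfield_add: "complex_subfield K \<Longrightarrow> x \<in> K \<Longrightarrow> y \<in> K \<Longrightarrow> x + y \<in> K"
  and subfield_diff: "complex_subfield K \<Longrightarrow> x \<in> K \<Longrightarrow> y \<in> K \<Longrightarrow> x - y \<in> K"
  and subfield_mult: "complex_subfield K \<Longrightarrow> x \<in> K \<Longrightarrow> y \<in> K \<Longrightarrow> x * y \<in> K"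
  by (auto simp: complex_subfield_def)

lemma subfield_inverse: "complex_subfield K \<Longrightarrow> x \<in> K \<Longrightarrow> inverse x \<in> K"
  by (cases "x = 0") (auto simp: complex_subfield_def)

lemma subfield_uminus: "complex_subfield K \<Longrightarrow> x \<in> K \<Longrightarrow> - x \<in> K"
  using subfield_diff[of K 0 x] subfield_0[of K] by simp

lemma subfield_divide: "complex_subfield K \<Longrightarrow> x \<in> K \<Longrightarrow> y \<in> K \<Longrightarrow> x / y \<in> K"
  by (simp add: divide_inverse subfield_mult subfield_inverse)

lemma subfield_of_int:
  assumes K: "complex_subfield K"
  shows "of_int n \<in> K"
proof -
  have of_nat: "of_nat k \<in> K" for k
    by (induction k) (auto intro: subfield_add subfield_0 subfield_1 K)
  show ?thesis
  proof (cases "n \<ge> 0")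
    case True
    then show ?thesis using of_nat[of "nat n"] by simp
  next
    case False
    then show ?thesis using subfield_uminus[OF K of_nat[of "nat (- n)"]] by simp
  qed
qed

lemma subfield_Rats: "complex_subfield K \<Longrightarrow> x \<in> \<rat> \<Longrightarrow> x \<in> K"
  by (erule Rats_cases') (auto intro: subfield_divide subfield_of_int)

lemma subfield_sum: "complex_subfield K \<Longrightarrow> (\<And>i. i \<in> A \<Longrightarrow> g i \<in> K) \<Longrightarrow> sum g A \<in> K"
  by (induction A rule: infinite_finite_induct) (auto intro: subfield_add subfield_0)

lemma complex_subfield_Rats: "complex_subfield \<rat>"
  by (auto simp: complex_subfield_def)

lemma complex_subfield_Inter:
  "(\<And>K. K \<in> S \<Longrightarrow> complex_subfield K) \<Longrightarrow> complex_subfield (\<Inter> S)"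
  by (simp add: complex_subfield_def)

definition poly_over :: "complex set \<Rightarrow> complex poly \<Rightarrow> bool" where
  "poly_over K p \<longleftrightarrow> (\<forall>i. coeff p i \<in> K)"

lemma poly_over_pCons_iff: "poly_over K (pCons c p) \<longleftrightarrow> c \<in> K \<and> poly_over K p"
  unfolding poly_over_def by (metis coeff_pCons_0 coeff_pCons_Suc not0_implies_Suc)

lemma poly_over_0: "complex_subfield K \<Longrightarrow> poly_over K 0"
  and poly_over_const: "complex_subfield K \<Longrightarrow> c \<in> K \<Longrightarrow> poly_over K [:c:]"
  and poly_over_monom: "complex_subfield K \<Longrightarrow> c \<in> K \<Longrightarrow> poly_over K (monom c n)"
  and poly_over_X: "complex_subfield K \<Longrightarrow> poly_over K [:0, 1:]"
  by (auto simp: poly_over_def coeff_pCons subfield_0 subfield_1 split: nat.splits)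

lemma poly_over_add: "complex_subfield K \<Longrightarrow> poly_over K p \<Longrightarrow> poly_over K q \<Longrightarrow> poly_over K (p + q)"
  and poly_over_diff: "complex_subfield K \<Longrightarrow> poly_over K p \<Longrightarrow> poly_over K q \<Longrightarrow> poly_over K (p - q)"
  and poly_over_uminus: "complex_subfield K \<Longrightarrow> poly_over K p \<Longrightarrow> poly_over K (- p)"
  by (simp_all add: poly_over_def subfield_add subfield_diff subfield_uminus)

lemma poly_over_mult: "complex_subfield K \<Longrightarrow> poly_over K p \<Longrightarrow> poly_over K q \<Longrightarrow> poly_over K (p * q)"
  unfolding poly_over_def coeff_mult by (auto intro!: subfield_sum subfield_mult)

lemma poly_over_mono: "poly_over K p \<Longrightarrow> K \<subseteq> L \<Longrightarrow> poly_over L p"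
  by (auto simp: poly_over_def)

lemma poly_over_of_int: "complex_subfield K \<Longrightarrow> poly_over K (map_poly of_int p)"
  by (simp add: poly_over_def coeff_map_poly subfield_of_int)

lemma poly_over_Rats_iff: "poly_over \<rat> p \<longleftrightarrow> (\<exists>q. p = map_poly of_rat q)"
proof
  assume "poly_over \<rat> p"
  then have "coeff p i \<in> range of_rat" for i by (simp add: poly_over_def Rats_def)
  moreover have "inv_into UNIV (of_rat :: rat \<Rightarrow> complex) 0 = 0"
    by (metis inv_f_f injI of_rat_0 of_rat_eq_iff)
  ultimately have "p = map_poly of_rat (map_poly (inv_into UNIV of_rat) p)"
    by (intro poly_eqI) (simp add: coeff_map_poly f_inv_into_f)
  then show "\<exists>q. p = map_poly of_rat q" ..
qed (auto simp: poly_over_def coeff_map_poly)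

lemma poly_in_subfield: "complex_subfield K \<Longrightarrow> poly_over K p \<Longrightarrow> x \<in> K \<Longrightarrow> poly p x \<in> K"
  by (induction p) (auto simp: poly_over_pCons_iff intro: subfield_add subfield_mult subfield_0)

locale subfield_hom =
  fixes K :: "complex set" and \<psi> :: "complex \<Rightarrow> complex"
  assumes subfield: "complex_subfield K"
    and hom_1: "\<psi> 1 = 1"
    and hom_add: "x \<in> K \<Longrightarrow> y \<in> K \<Longrightarrow> \<psi> (x + y) = \<psi> x + \<psi> y"
    and hom_mult: "x \<in> K \<Longrightarrow> y \<in> K \<Longrightarrow> \<psi> (x * y) = \<psi> x * \<psi> y"
begin

lemma hom_0: "\<psi> 0 = 0"
  using hom_add[OF subfield_0 subfield_0] subfield by simp

lemma hom_uminus: "x \<in> K \<Longrightarrow> \<psi> (- x) = - \<psi> x"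
  using hom_add[of x "- x"] subfield_uminus[OF subfield] hom_0 by (simp add: add_eq_0_iff2)

lemma hom_diff: "x \<in> K \<Longrightarrow> y \<in> K \<Longrightarrow> \<psi> (x - y) = \<psi> x - \<psi> y"
  using hom_add[of x "- y"] hom_uminus[of y] subfield_uminus[OF subfield, of y] by simp

lemma hom_sum: "(\<And>i. i \<in> A \<Longrightarrow> g i \<in> K) \<Longrightarrow> \<psi> (sum g A) = (\<Sum>i\<in>A. \<psi> (g i))"
  by (induction A rule: infinite_finite_induct)
    (simp_all add: hom_0 hom_add subfield_sum[OF subfield])

lemma hom_of_int: "\<psi> (of_int n) = of_int n"
proof -
  have of_nat: "\<psi> (of_nat k) = of_nat k" for k
    using subfield_of_int[OF subfield, of "int _"]
    by (induction k) (simp_all add: hom_0 hom_1 hom_add subfield_1[OF subfield])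
  show ?thesis
  proof (cases "n \<ge> 0")
    case True
    then show ?thesis using of_nat[of "nat n"] by simp
  next
    case False
    then show ?thesis
      using hom_uminus[OF subfield_of_int[OF subfield, of "int (nat (- n))"]] of_nat[of "nat (- n)"]
      by simp
  qed
qed

lemma hom_nonzero: "x \<in> K \<Longrightarrow> x \<noteq> 0 \<Longrightarrow> \<psi> x \<noteq> 0"
  using hom_mult[of x "inverse x"] subfield_inverse[OF subfield, of x] hom_1 by force

lemma hom_inverse: "x \<in> K \<Longrightarrow> \<psi> (inverse x) = inverse (\<psi> x)"
  using hom_mult[of x "inverse x"] subfield_inverse[OF subfield, of x] hom_1 hom_0
  by (cases "x = 0") (auto intro: inverse_unique[symmetric])

lemma hom_Rats: "x \<in> \<rat> \<Longrightarrow> \<psi> x = x"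
  by (erule Rats_cases')
    (simp add: divide_inverse hom_mult hom_inverse hom_of_int subfield_of_int[OF subfield]
      subfield_inverse[OF subfield])

lemma inj_on_hom: "inj_on \<psi> K"
proof (rule inj_onI)
  fix x y assume "x \<in> K" "y \<in> K" "\<psi> x = \<psi> y"
  then show "x = y"
    using hom_diff[of x y] hom_nonzero[of "x - y"] subfield_diff[OF subfield] by auto
qed

lemma coeff_map_poly_hom: "coeff (map_poly \<psi> p) n = \<psi> (coeff p n)"
  by (simp add: coeff_map_poly hom_0)

lemma map_poly_hom_const: "map_poly \<psi> [:c:] = [:\<psi> c:]"
  by (simp add: map_poly_pCons hom_0)

lemma map_poly_hom_add:
  "poly_over K p \<Longrightarrow> poly_over K q \<Longrightarrow> map_poly \<psi> (p + q) = map_poly \<psi> p + map_poly \<psi> q"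
  by (intro poly_eqI) (simp add: coeff_map_poly_hom hom_add poly_over_def)

lemma map_poly_hom_diff:
  "poly_over K p \<Longrightarrow> poly_over K q \<Longrightarrow> map_poly \<psi> (p - q) = map_poly \<psi> p - map_poly \<psi> q"
  by (intro poly_eqI) (simp add: coeff_map_poly_hom hom_diff poly_over_def)

lemma map_poly_hom_mult:
  "poly_over K p \<Longrightarrow> poly_over K q \<Longrightarrow> map_poly \<psi> (p * q) = map_poly \<psi> p * map_poly \<psi> q"
  by (intro poly_eqI)
    (simp add: coeff_map_poly_hom coeff_mult hom_sum hom_mult poly_over_def
      subfield_mult[OF subfield])

lemma map_poly_hom_of_int: "map_poly \<psi> (map_poly of_int p) = map_poly of_int p"
  by (intro poly_eqI) (simp add: coeff_map_poly_hom coeff_map_poly hom_of_int)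

lemma degree_map_poly_hom: "poly_over K p \<Longrightarrow> degree (map_poly \<psi> p) = degree p"
  by (cases "p = 0") (auto intro: map_poly_degree_eq simp: hom_nonzero poly_over_def hom_0)

lemma hom_poly: "poly_over K p \<Longrightarrow> x \<in> K \<Longrightarrow> \<psi> (poly p x) = poly (map_poly \<psi> p) (\<psi> x)"
  by (induction p)
    (auto simp: poly_over_pCons_iff map_poly_pCons hom_0 hom_add hom_mult
      subfield_mult[OF subfield] poly_in_subfield[OF subfield])

lemma hom_poly_Rats:
  assumes "poly_over \<rat> p" "x \<in> K"
  shows "\<psi> (poly p x) = poly p (\<psi> x)"
proof -
  have "map_poly \<psi> p = p"
    using assms(1) by (intro poly_eqI) (simp add: coeff_map_poly_hom hom_Rats poly_over_def)
  then show ?thesis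
    using hom_poly[OF poly_over_mono[OF assms(1)] assms(2)] subfield_Rats[OF subfield] by auto
qed

lemma complex_subfield_image: "complex_subfield (\<psi> ` K)"
  unfolding complex_subfield_def
proof (intro conjI ballI impI)
  show "0 \<in> \<psi> ` K" "1 \<in> \<psi> ` K"
    using hom_0 hom_1 subfield_0[OF subfield] subfield_1[OF subfield] by (metis image_eqI)+
  fix u v assume "u \<in> \<psi> ` K" "v \<in> \<psi> ` K"
  then obtain x y where xy: "x \<in> K" "y \<in> K" "u = \<psi> x" "v = \<psi> y" by blast
  show "u + v \<in> \<psi> ` K" "u - v \<in> \<psi> ` K" "u * v \<in> \<psi> ` K"
    using xy hom_add hom_diff hom_mult subfield_add[OF subfield] subfield_diff[OF subfield]
      subfield_mult[OF subfield] by (metis image_eqI)+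
  show "inverse u \<in> \<psi> ` K" using xy hom_inverse subfield_inverse[OF subfield] by (metis image_eqI)
qed

lemma complex_subfield_preimage:
  assumes "complex_subfield L"
  shows "complex_subfield {x \<in> K. \<psi> x \<in> L}"
  using assms subfield hom_0 hom_1 hom_add hom_diff hom_mult hom_inverse
  by (auto simp: complex_subfield_def)

end

section \<open>Minimal polynomials and simple extensions\<close>

lemma poly_over_cancel_lead:
  assumes K: "complex_subfield K" and ab: "poly_over K a" "poly_over K b"
    and "a \<noteq> 0" "b \<noteq> 0" "degree b \<le> degree a"
  obtains c k where "c \<in> K" "a - monom c k * b = 0 \<or> degree (a - monom c k * b) < degree a"
proof -
  define c where "c = lead_coeff a / lead_coeff b"
  define k where "k = degree a - degree b"
  have c: "c \<in> K" "c \<noteq> 0"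
    unfolding c_def using ab assms(4,5) by (auto simp: poly_over_def intro: subfield_divide[OF K])
  have deg: "degree (monom c k * b) = degree a"
    using c assms(5,6) by (simp add: degree_mult_eq degree_monom_eq k_def)
  have "lead_coeff (monom c k * b) = lead_coeff a"
    using c assms(5) by (simp add: lead_coeff_mult degree_monom_eq c_def)
  then have "coeff (a - monom c k * b) (degree a) = 0" using deg by simp
  moreover have "degree (a - monom c k * b) \<le> degree a"
    using deg degree_diff_le[of a "degree a"] by auto
  ultimately have "a - monom c k * b = 0 \<or> degree (a - monom c k * b) < degree a"
    by (metis le_neq_implies_less leading_coeff_0_iff)
  then show thesis using that c(1) by blast
qed

lemma poly_over_div_mod:
  assumes K: "complex_subfield K" and b: "poly_over K b" "b \<noteq> 0"
  shows "poly_over K a \<Longrightarrow>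
    \<exists>s r. poly_over K s \<and> poly_over K r \<and> a = s * b + r \<and> (r = 0 \<or> degree r < degree b)"
proof (induction "degree a" arbitrary: a rule: less_induct)
  case less
  show ?case
  proof (cases "a = 0 \<or> degree a < degree b")
    case True
    then show ?thesis using less.prems poly_over_0[OF K] by (intro exI[of _ 0] exI[of _ a]) auto
  next
    case False
    then obtain c k where c: "c \<in> K"
      and reduced: "a - monom c k * b = 0 \<or> degree (a - monom c k * b) < degree a"
      using poly_over_cancel_lead[OF K less.prems b(1)] b(2) by (metis not_le)
    have monom: "poly_over K (monom c k)" by (rule poly_over_monom[OF K c])
    from reduced show ?thesis
    proof
      assume "a - monom c k * b = 0"
      then show ?thesis using monom poly_over_0[OF K]
        by (intro exI[of _ "monom c k"] exI[of _ 0]) simp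
    next
      assume "degree (a - monom c k * b) < degree a"
      moreover have "poly_over K (a - monom c k * b)"
        by (intro poly_over_diff poly_over_mult K less.prems b(1) monom)
      ultimately obtain s r where sr: "poly_over K s" "poly_over K r"
        "a - monom c k * b = s * b + r"
        "r = 0 \<or> degree r < degree b"
        using less.hyps by blast
      then show ?thesis
        using poly_over_add[OF K sr(1) monom]
        by (intro exI[of _ "s + monom c k"] exI[of _ r]) (auto simp: algebra_simps)
    qed
  qed
qed

definition adjoin :: "complex set \<Rightarrow> complex \<Rightarrow> complex set" where
  "adjoin K \<gamma> = {poly p \<gamma> | p. poly_over K p}"

lemma subset_adjoin: "complex_subfield K \<Longrightarrow> K \<subseteq> adjoin K \<gamma>"
  unfolding adjoin_def by (force intro: poly_over_const)

lemma generator_in_adjoin: "complex_subfield K \<Longrightarrow> \<gamma> \<in> adjoin K \<gamma>"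
  unfolding adjoin_def by (force intro: poly_over_X)

lemma adjoin_subset:
  assumes "complex_subfield L" "K \<subseteq> L" "\<gamma> \<in> L"
  shows "adjoin K \<gamma> \<subseteq> L"
  unfolding adjoin_def using poly_in_subfield[OF assms(1) poly_over_mono[OF _ assms(2)] assms(3)]
    by blast

locale minimal_poly =
  fixes K :: "complex set" and \<gamma> :: complex and \<mu> :: "complex poly"
  assumes subfield: "complex_subfield K"
    and poly_over_minpoly: "poly_over K \<mu>"
    and minpoly_nonzero: "\<mu> \<noteq> 0"
    and minpoly_root: "poly \<mu> \<gamma> = 0"
    and minpoly_degree_le: "poly_over K p \<Longrightarrow> p \<noteq> 0 \<Longrightarrow> poly p \<gamma> = 0 \<Longrightarrow> degree \<mu> \<le> degree p"

lemma minimal_poly_exists: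
  assumes "complex_subfield K" "poly_over K p" "p \<noteq> 0" "poly p \<gamma> = 0"
  obtains \<mu> where "minimal_poly K \<gamma> \<mu>"
proof -
  define P where "P n \<longleftrightarrow> (\<exists>p. poly_over K p \<and> p \<noteq> 0 \<and> poly p \<gamma> = 0 \<and> degree p = n)" for n
  have "P (degree p)" using assms unfolding P_def by blast
  then obtain \<mu> where \<mu>: "poly_over K \<mu>" "\<mu> \<noteq> 0" "poly \<mu> \<gamma> = 0" "degree \<mu> = (LEAST n. P n)"
    using LeastI[of P] unfolding P_def by blast
  have "degree \<mu> \<le> degree q" if "poly_over K q" "q \<noteq> 0" "poly q \<gamma> = 0" for q
    unfolding \<mu>(4) by (rule Least_le) (use that in \<open>auto simp: P_def\<close>)
  then show ?thesis using \<mu> assms(1) by (intro that[of \<mu>]) (simp add: minimal_poly_def)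
qed

context minimal_poly
begin

lemma minpoly_dvd:
  assumes "poly_over K p" "poly p \<gamma> = 0"
  obtains s where "poly_over K s" "p = s * \<mu>"
proof -
  obtain s r where sr: "poly_over K s" "poly_over K r" "p = s * \<mu> + r" "r = 0 \<or> degree r < degree \<mu>"
    using poly_over_div_mod[OF subfield poly_over_minpoly minpoly_nonzero assms(1)] by blast
  have "poly r \<gamma> = 0" using sr(3) assms(2) minpoly_root by simp
  then have "r = 0" using sr(2,4) minpoly_degree_le[of r] by fastforce
  then show ?thesis using sr that by auto
qed

lemma degree_minpoly_pos: "degree \<mu> > 0"
  using minpoly_nonzero minpoly_root by (metis degree_eq_zeroE gr0I pCons_eq_0_iff poly_const_conv)

lemma minpoly_reduce:
  assumes "poly_over K p"
  obtains r where "poly_over K r" "poly r \<gamma> = poly p \<gamma>" "degree r < degree \<mu>"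
proof -
  obtain s r where sr: "poly_over K s" "poly_over K r" "p = s * \<mu> + r" "r = 0 \<or> degree r < degree \<mu>"
    using poly_over_div_mod[OF subfield poly_over_minpoly minpoly_nonzero assms] by blast
  then show ?thesis using degree_minpoly_pos minpoly_root by (intro that[of r]) auto
qed

lemma root_in_subfield: "degree \<mu> = 1 \<Longrightarrow> \<gamma> \<in> K"
proof -
  assume "degree \<mu> = 1"
  then have "coeff \<mu> 1 \<noteq> 0" "poly \<mu> \<gamma> = coeff \<mu> 0 + coeff \<mu> 1 * \<gamma>"
    by (metis leading_coeff_0_iff minpoly_nonzero) (simp add: poly_altdef \<open>degree \<mu> = 1\<close>)
  then have "\<gamma> = - coeff \<mu> 0 / coeff \<mu> 1"
    using minpoly_root by (simp add: field_simps add_eq_0_iff)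
  then show ?thesis
    using poly_over_minpoly subfield
      by (auto simp: poly_over_def intro: subfield_divide subfield_uminus)
qed

lemma reduced_poly_invertible:
  "poly_over K p \<Longrightarrow> poly p \<gamma> \<noteq> 0 \<Longrightarrow> degree p < degree \<mu> \<Longrightarrow>
    \<exists>q. poly_over K q \<and> poly q \<gamma> * poly p \<gamma> = 1"
proof (induction "degree p" arbitrary: p rule: less_induct)
  case less
  show ?case
  proof (cases "degree p = 0")
    case True
    then obtain c where c: "p = [:c:]" by (metis degree_eq_zeroE)
    then have "c \<in> K" "c \<noteq> 0" using less.prems(1,2) by (auto simp: poly_over_pCons_iff)
    then show ?thesis using c poly_over_const[OF subfield subfield_inverse[OF subfield]]
      by (intro exI[of _ "[:inverse c:]"]) auto
  next
    case False
    have p0: "p \<noteq> 0" using less.prems by auto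
    obtain s r where sr: "poly_over K s" "poly_over K r" "\<mu> = s * p + r"
      "r = 0 \<or> degree r < degree p"
      using poly_over_div_mod[OF subfield less.prems(1) p0 poly_over_minpoly] by blast
    have rs: "poly r \<gamma> = - poly s \<gamma> * poly p \<gamma>"
      using sr(3) minpoly_root by (simp add: eq_neg_iff_add_eq_0 algebra_simps)
    show ?thesis
    proof (cases "poly r \<gamma> = 0")
      case True
      then have s\<gamma>: "poly s \<gamma> = 0" using rs less.prems(2) by simp
      have s0: "s \<noteq> 0" using sr less.prems(3) minpoly_nonzero by auto
      have "degree (s * p) \<le> degree \<mu>"
        using sr(3,4) less.prems(3) degree_diff_le[of \<mu> "degree \<mu>" r] by (auto simp: algebra_simps)
      then have "degree s < degree \<mu>" using False s0 p0 by (simp add: degree_mult_eq)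
      then show ?thesis using minpoly_degree_le[OF sr(1) s0 s\<gamma>] by simp
    next
      case False
      have dr: "degree r < degree p" using sr(4) False by auto
      obtain q where q: "poly_over K q" "poly q \<gamma> * poly r \<gamma> = 1"
        using less.hyps[OF dr sr(2) False] dr less.prems(3) by auto
      have "poly (- q * s) \<gamma> * poly p \<gamma> = 1" using q(2) rs by (simp add: algebra_simps)
      then show ?thesis using poly_over_mult[OF subfield poly_over_uminus[OF subfield q(1)] sr(1)]
        by blast
    qed
  qed
qed

lemma complex_subfield_adjoin: "complex_subfield (adjoin K \<gamma>)"
  unfolding complex_subfield_def
proof (intro conjI ballI impI)
  show "0 \<in> adjoin K \<gamma>" "1 \<in> adjoin K \<gamma>"
    using subset_adjoin[OF subfield] subfield_0[OF subfield] subfield_1[OF subfield] by auto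
  fix x y assume "x \<in> adjoin K \<gamma>" "y \<in> adjoin K \<gamma>"
  then obtain p q where pq: "poly_over K p" "poly_over K q" "x = poly p \<gamma>" "y = poly q \<gamma>"
    unfolding adjoin_def by blast
  have "x + y = poly (p + q) \<gamma>" "x - y = poly (p - q) \<gamma>" "x * y = poly (p * q) \<gamma>"
    using pq by simp_all
  then show "x + y \<in> adjoin K \<gamma>" "x - y \<in> adjoin K \<gamma>" "x * y \<in> adjoin K \<gamma>"
    unfolding adjoin_def
    using poly_over_add[OF subfield pq(1,2)] poly_over_diff[OF subfield pq(1,2)]
      poly_over_mult[OF subfield pq(1,2)] by blast+
next
  fix x assume x: "x \<in> adjoin K \<gamma>" and x0: "x \<noteq> 0"
  then obtain p where p: "poly_over K p" "x = poly p \<gamma>" unfolding adjoin_def by blast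
  obtain r where r: "poly_over K r" "poly r \<gamma> = poly p \<gamma>" "degree r < degree \<mu>"
    using minpoly_reduce[OF p(1)] by blast
  obtain q where q: "poly_over K q" "poly q \<gamma> * poly r \<gamma> = 1"
    using reduced_poly_invertible[OF r(1) _ r(3)] r(2) p(2) x0 by auto
  have "inverse x = poly q \<gamma>" using q(2) r(2) p(2) by (metis inverse_unique mult.commute)
  then show "inverse x \<in> adjoin K \<gamma>" unfolding adjoin_def using q(1) by blast
qed

lemma eval_map_poly_hom_eq:
  assumes h: "subfield_hom K \<psi>" and root: "poly (map_poly \<psi> \<mu>) \<gamma>' = 0"
    and pq: "poly_over K p" "poly_over K q" "poly p \<gamma> = poly q \<gamma>"
  shows "poly (map_poly \<psi> p) \<gamma>' = poly (map_poly \<psi> q) \<gamma>'"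
proof -
  interpret h: subfield_hom K \<psi> by (fact h)
  obtain s where s: "poly_over K s" "p - q = s * \<mu>"
    using minpoly_dvd[of "p - q"] poly_over_diff[OF subfield pq(1,2)] pq(3) by auto
  have "map_poly \<psi> p - map_poly \<psi> q = map_poly \<psi> s * map_poly \<psi> \<mu>"
    using h.map_poly_hom_diff[OF pq(1,2)] h.map_poly_hom_mult[OF s(1) poly_over_minpoly] s(2)
      by simp
  then have "poly (map_poly \<psi> p) \<gamma>' - poly (map_poly \<psi> q) \<gamma>' = 0"
    using root by (metis mult_zero_right poly_diff poly_mult)
  then show ?thesis by simp
qed

lemma extend_hom:
  assumes h: "subfield_hom K \<psi>" and root: "poly (map_poly \<psi> \<mu>) \<gamma>' = 0"
  obtains \<Psi> where "subfield_hom (adjoin K \<gamma>) \<Psi>" "\<And>x. x \<in> K \<Longrightarrow> \<Psi> x = \<psi> x" "\<Psi> \<gamma> = \<gamma>'"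
proof -
  interpret h: subfield_hom K \<psi> by (fact h)
  define \<Psi> where "\<Psi> x = poly (map_poly \<psi> (SOME p. poly_over K p \<and> x = poly p \<gamma>)) \<gamma>'" for x
  have \<Psi>: "\<Psi> (poly p \<gamma>) = poly (map_poly \<psi> p) \<gamma>'" if "poly_over K p" for p
  proof -
    have "poly_over K (SOME q. poly_over K q \<and> poly p \<gamma> = poly q \<gamma>) \<and>
        poly p \<gamma> = poly (SOME q. poly_over K q \<and> poly p \<gamma> = poly q \<gamma>) \<gamma>"
      by (rule someI[of _ p]) (use that in auto)
    then show ?thesis unfolding \<Psi>_def using eval_map_poly_hom_eq[OF h root that] by metis
  qed
  show thesis
  proof
    show "subfield_hom (adjoin K \<gamma>) \<Psi>"
    proof
      show "complex_subfield (adjoin K \<gamma>)" by (fact complex_subfield_adjoin)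
      show "\<Psi> 1 = 1"
        using \<Psi>[OF poly_over_const[OF subfield subfield_1[OF subfield]]]
          by (simp add: h.map_poly_hom_const h.hom_1)
      fix x y assume "x \<in> adjoin K \<gamma>" "y \<in> adjoin K \<gamma>"
      then obtain p q where pq: "poly_over K p" "poly_over K q" "x = poly p \<gamma>" "y = poly q \<gamma>"
        unfolding adjoin_def by blast
      show "\<Psi> (x + y) = \<Psi> x + \<Psi> y"
        using \<Psi>[OF poly_over_add[OF subfield pq(1,2)]] \<Psi>[OF pq(1)] \<Psi>[OF pq(2)] pq(3,4)
        by (simp add: h.map_poly_hom_add[OF pq(1,2)])
      show "\<Psi> (x * y) = \<Psi> x * \<Psi> y"
        using \<Psi>[OF poly_over_mult[OF subfield pq(1,2)]] \<Psi>[OF pq(1)] \<Psi>[OF pq(2)] pq(3,4)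
        by (simp add: h.map_poly_hom_mult[OF pq(1,2)])
    qed
    show "\<Psi> x = \<psi> x" if "x \<in> K" for x
      using \<Psi>[OF poly_over_const[OF subfield that]] by (simp add: h.map_poly_hom_const)
    show "\<Psi> \<gamma> = \<gamma>'"
      using \<Psi>[OF poly_over_X[OF subfield]] by (simp add: map_poly_pCons h.hom_0 h.hom_1)
  qed
qed

end

section \<open>Splitting fields and their automorphisms\<close>

lemma roots_subset_splitting_field: "int_poly_roots f \<subseteq> splitting_field f"
  unfolding splitting_field_def by auto

lemma splitting_field_least:
  "complex_subfield L \<Longrightarrow> int_poly_roots f \<subseteq> L \<Longrightarrow> splitting_field f \<subseteq> L"
  unfolding splitting_field_def by auto

lemma complex_subfield_splitting_field: "complex_subfield (splitting_field f)"
  unfolding splitting_field_def by (rule complex_subfield_Inter) auto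

lemma finite_int_poly_roots: "f \<noteq> 0 \<Longrightarrow> finite (int_poly_roots f)"
  unfolding int_poly_roots_def by (rule poly_roots_finite) (simp add: map_poly_of_int_eq_0_iff)

lemma subfield_hom_field_aut:
  "complex_subfield K \<Longrightarrow> \<sigma> \<in> field_auts K \<Longrightarrow> subfield_hom K \<sigma>"
  by (simp add: field_auts_def subfield_hom_def)

lemma extend_hom_splitting_field:
  assumes "f \<noteq> 0"
  shows "complex_subfield L \<Longrightarrow> L \<subseteq> splitting_field f \<Longrightarrow> subfield_hom L \<psi> \<Longrightarrow>
    \<exists>\<Phi>. subfield_hom (splitting_field f) \<Phi> \<and> (\<forall>x\<in>L. \<Phi> x = \<psi> x)"
proof (induction "card (int_poly_roots f - L)" arbitrary: L \<psi> rule: less_induct)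
  case less
  show ?case
  proof (cases "int_poly_roots f \<subseteq> L")
    case True
    then have "L = splitting_field f" using splitting_field_least less.prems by blast
    then show ?thesis using less.prems by blast
  next
    case False
    then obtain \<gamma> where \<gamma>: "\<gamma> \<in> int_poly_roots f" "\<gamma> \<notin> L" by blast
    have "map_poly of_int f \<noteq> (0 :: complex poly)" "poly (map_poly of_int f) \<gamma> = 0"
      using assms \<gamma>(1) by (simp_all add: map_poly_of_int_eq_0_iff int_poly_roots_def)
    then obtain \<mu> where \<mu>: "minimal_poly L \<gamma> \<mu>"
      by (rule minimal_poly_exists[OF less.prems(1) poly_over_of_int[OF less.prems(1)]])
    interpret \<mu>: minimal_poly L \<gamma> \<mu> by (fact \<mu>)
    interpret \<psi>: subfield_hom L \<psi> by (fact less.prems(3))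
    have "degree (map_poly \<psi> \<mu>) > 0"
      using \<psi>.degree_map_poly_hom[OF \<mu>.poly_over_minpoly] \<mu>.degree_minpoly_pos by simp
    then obtain \<gamma>' where "poly (map_poly \<psi> \<mu>) \<gamma>' = 0"
      using fundamental_theorem_of_algebra[of "map_poly \<psi> \<mu>"] by (auto simp: constant_degree)
    then obtain \<Psi> where \<Psi>: "subfield_hom (adjoin L \<gamma>) \<Psi>" "\<And>x. x \<in> L \<Longrightarrow> \<Psi> x = \<psi> x"
      using \<mu>.extend_hom[OF less.prems(3)] by metis
    have "int_poly_roots f - adjoin L \<gamma> \<subset> int_poly_roots f - L"
      using generator_in_adjoin[OF less.prems(1)] subset_adjoin[OF less.prems(1)] \<gamma> by auto
    then have "card (int_poly_roots f - adjoin L \<gamma>) < card (int_poly_roots f - L)"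
      by (rule psubset_card_mono[rotated]) (use finite_int_poly_roots[OF assms] in auto)
    moreover have "adjoin L \<gamma> \<subseteq> splitting_field f"
      using adjoin_subset complex_subfield_splitting_field less.prems(2) \<gamma>(1)
        roots_subset_splitting_field by blast
    ultimately obtain \<Phi> where "subfield_hom (splitting_field f) \<Phi>" "\<forall>x\<in>adjoin L \<gamma>. \<Phi> x = \<Psi> x"
      using less.hyps \<mu>.complex_subfield_adjoin \<Psi>(1) by blast
    then show ?thesis using \<Psi>(2) subset_adjoin[OF less.prems(1), of \<gamma>] by (metis subsetD)
  qed
qed

lemma splitting_field_hom_aut:
  assumes "f \<noteq> 0" and h: "subfield_hom (splitting_field f) \<Phi>"
  shows "restrict \<Phi> (splitting_field f) \<in> field_auts (splitting_field f)"
proof -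
  let ?K = "splitting_field f" and ?R = "int_poly_roots f"
  interpret \<Phi>: subfield_hom ?K \<Phi> by (fact h)
  have "\<Phi> z \<in> ?R" if "z \<in> ?R" for z
  proof -
    have "z \<in> ?K" using that roots_subset_splitting_field by blast
    then have "\<Phi> (poly (map_poly of_int f) z) = poly (map_poly of_int f) (\<Phi> z)"
      using \<Phi>.hom_poly[OF poly_over_of_int[OF \<Phi>.subfield]] by (simp add: \<Phi>.map_poly_hom_of_int)
    then show ?thesis using that \<Phi>.hom_0 by (simp add: int_poly_roots_def)
  qed
  then have "\<Phi> ` ?R = ?R"
    using endo_inj_surj[OF finite_int_poly_roots[OF assms(1)]]
      inj_on_subset[OF \<Phi>.inj_on_hom roots_subset_splitting_field] by blast
  then have "?R \<subseteq> {x \<in> ?K. \<Phi> x \<in> ?K}" "?R \<subseteq> \<Phi> ` ?K"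
    using roots_subset_splitting_field[of f] image_mono[of ?R ?K \<Phi>] by blast+
  then have "?K \<subseteq> {x \<in> ?K. \<Phi> x \<in> ?K}" "?K \<subseteq> \<Phi> ` ?K"
    using splitting_field_least \<Phi>.complex_subfield_image
      \<Phi>.complex_subfield_preimage[OF complex_subfield_splitting_field] by blast+
  then have "bij_betw \<Phi> ?K ?K"
    using \<Phi>.inj_on_hom by (auto simp: bij_betw_def)
  then show ?thesis
    using \<Phi>.hom_1 \<Phi>.hom_add \<Phi>.hom_mult complex_subfield_splitting_field
    by (simp add: field_auts_def bij_betw_cong[of ?K "restrict \<Phi> ?K" \<Phi>]
        subfield_1 subfield_add subfield_mult)
qed

lemma compose_field_auts:
  assumes "f \<noteq> 0" "\<sigma> \<in> field_auts (splitting_field f)" "\<tau> \<in> field_auts (splitting_field f)"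
  shows "compose (splitting_field f) \<sigma> \<tau> \<in> field_auts (splitting_field f)"
proof -
  let ?K = "splitting_field f"
  interpret \<sigma>: subfield_hom ?K \<sigma> using assms(2) complex_subfield_splitting_field
    by (rule subfield_hom_field_aut[rotated])
  interpret \<tau>: subfield_hom ?K \<tau> using assms(3) complex_subfield_splitting_field
    by (rule subfield_hom_field_aut[rotated])
  have into: "\<tau> x \<in> ?K" if "x \<in> ?K" for x
    using assms(3) that by (auto simp: field_auts_def bij_betw_def)
  have "subfield_hom ?K (\<sigma> \<circ> \<tau>)"
    by unfold_locales
      (simp_all add: complex_subfield_splitting_field \<sigma>.hom_1 \<tau>.hom_1 \<sigma>.hom_add \<tau>.hom_add
        \<sigma>.hom_mult \<tau>.hom_mult into)
  then show ?thesis
    using splitting_field_hom_aut[OF assms(1)] by (simp add: compose_def o_def)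
qed

lemma id_field_aut: "f \<noteq> 0 \<Longrightarrow> restrict id (splitting_field f) \<in> field_auts (splitting_field f)"
  using splitting_field_hom_aut[of f id] complex_subfield_splitting_field
  by (simp add: subfield_hom_def)

lemma monoid_gal_group:
  assumes "f \<noteq> 0"
  shows "monoid (gal_group f)"
proof
  let ?K = "splitting_field f"
  have maps: "\<sigma> \<in> ?K \<rightarrow> ?K" "\<sigma> \<in> extensional ?K" if "\<sigma> \<in> field_auts ?K" for \<sigma>
    using that by (auto simp: field_auts_def bij_betw_def)
  fix \<sigma> \<tau> \<upsilon>
  assume "\<sigma> \<in> carrier (gal_group f)" "\<tau> \<in> carrier (gal_group f)" "\<upsilon> \<in> carrier (gal_group f)"
  then show "\<sigma> \<otimes>\<^bsub>gal_group f\<^esub> \<tau> \<in> carrier (gal_group f)"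
    "\<sigma> \<otimes>\<^bsub>gal_group f\<^esub> \<tau> \<otimes>\<^bsub>gal_group f\<^esub> \<upsilon> = \<sigma> \<otimes>\<^bsub>gal_group f\<^esub> (\<tau> \<otimes>\<^bsub>gal_group f\<^esub> \<upsilon>)"
    "\<one>\<^bsub>gal_group f\<^esub> \<otimes>\<^bsub>gal_group f\<^esub> \<sigma> = \<sigma>" "\<sigma> \<otimes>\<^bsub>gal_group f\<^esub> \<one>\<^bsub>gal_group f\<^esub> = \<sigma>"
    using compose_field_auts[OF assms] compose_assoc[OF maps(1), symmetric] Id_compose[OF maps]
      compose_Id[OF maps]
    by (simp_all add: gal_group_def restrict_def id_def)
qed (simp add: gal_group_def id_field_aut[OF assms])

lemma gal_group_pow_apply:
  assumes "f \<noteq> 0" "\<sigma> \<in> carrier (gal_group f)" "x \<in> splitting_field f"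
  shows "(\<sigma> [^]\<^bsub>gal_group f\<^esub> n) x = (\<sigma> ^^ n) x"
  using assms(3)
proof (induction n arbitrary: x)
  case (Suc n)
  have "\<sigma> x \<in> splitting_field f" using assms(2) Suc.prems
    by (auto simp: gal_group_def field_auts_def bij_betw_def)
  then show ?case using Suc
    by (simp add: gal_group_def compose_eq funpow_Suc_right del: funpow.simps)
qed (simp add: gal_group_def)

lemma extend_hom_field_aut:
  assumes "f \<noteq> 0" "complex_subfield L" "L \<subseteq> splitting_field f" "subfield_hom L \<psi>"
  obtains \<sigma> where "\<sigma> \<in> field_auts (splitting_field f)" "\<And>x. x \<in> L \<Longrightarrow> \<sigma> x = \<psi> x"
proof -
  obtain \<Phi> where "subfield_hom (splitting_field f) \<Phi>" "\<forall>x\<in>L. \<Phi> x = \<psi> x"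
    using extend_hom_splitting_field[OF assms] by blast
  then show thesis
    using assms(3)
      by (intro that[of "restrict \<Phi> (splitting_field f)"] splitting_field_hom_aut[OF assms(1)]) auto
qed

lemma field_aut_maps_roots:
  assumes "\<sigma> \<in> field_auts (splitting_field f)" "\<gamma> \<in> int_poly_roots f"
  shows "\<sigma> \<gamma> \<in> int_poly_roots f"
proof -
  interpret \<sigma>: subfield_hom "splitting_field f" \<sigma>
    using complex_subfield_splitting_field assms(1) by (rule subfield_hom_field_aut)
  have "\<sigma> (poly (map_poly of_int f) \<gamma>) = poly (map_poly of_int f) (\<sigma> \<gamma>)"
    using assms(2) roots_subset_splitting_field
    by (intro \<sigma>.hom_poly_Rats) (auto simp: poly_over_of_int[OF complex_subfield_Rats])
  then show ?thesis using assms(2) \<sigma>.hom_0 by (simp add: int_poly_roots_def)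
qed

section \<open>Roots of irreducible polynomials\<close>

lemma rsquarefree_dvd_other_root:
  fixes p q :: "complex poly"
  assumes "rsquarefree p" "q dvd p" "degree q \<ge> 2" "poly q \<gamma> = 0"
  obtains \<gamma>' where "\<gamma>' \<noteq> \<gamma>" "poly q \<gamma>' = 0"
proof -
  obtain r where r: "q = [:-\<gamma>, 1:] * r" using assms(4) by (metis poly_eq_0_iff_dvd dvdE)
  then have "degree r \<ge> 1"
    using assms(3) by (cases "r = 0") (simp_all add: degree_mult_eq del: mult_pCons_left)
  then obtain \<gamma>' where \<gamma>': "poly r \<gamma>' = 0"
    using fundamental_theorem_of_algebra[of r] by (auto simp: constant_degree)
  have "\<gamma>' \<noteq> \<gamma>"
  proof
    assume "\<gamma>' = \<gamma>"
    then obtain s where "r = [:-\<gamma>, 1:] * s" using \<gamma>' by (metis poly_eq_0_iff_dvd dvdE)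
    then have "q = [:-\<gamma>, 1:] ^ 2 * s" using r by (simp only: power2_eq_square mult.assoc)
    then have "[:-\<gamma>, 1:] ^ 2 dvd q" by (rule dvdI)
    then have "[:-\<gamma>, 1:] ^ 2 dvd p" using assms(2) by (rule dvd_trans)
    then have "order \<gamma> p \<ge> 2" using assms(1) by (simp add: order_divides rsquarefree_def)
    then show False using assms(1) by (auto simp: rsquarefree_def dest: spec[of _ \<gamma>])
  qed
  then show thesis using that \<gamma>' r by simp
qed

lemma irreducible_degree_le:
  fixes F p :: "rat poly"
  assumes irr: "irreducible F" and "p \<noteq> 0"
    and "poly (map_poly of_rat F) a = (0 :: complex)" "poly (map_poly of_rat p) a = 0"
  shows "degree F \<le> degree p"
proof -
  have of_rat_hom: "map_poly (of_rat :: rat \<Rightarrow> complex) (x * F + y * p) =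
      map_poly of_rat x * map_poly of_rat F + map_poly of_rat y * map_poly of_rat p" for x y
    by (intro poly_eqI) (simp add: coeff_map_poly coeff_mult of_rat_add of_rat_mult of_rat_sum)
  define d where "d = gcd F p"
  have "poly (map_poly (of_rat :: rat \<Rightarrow> complex) d) a = 0"
    unfolding d_def bezout_coefficients_fst_snd[of F p, symmetric] of_rat_hom using assms(3,4)
      by simp
  then have "\<not> d dvd 1"
    using \<open>p \<noteq> 0\<close> by (auto simp: d_def is_unit_iff_degree elim!: degree_eq_zeroE)
  moreover obtain e where "F = d * e" using gcd_dvd1[of F p] unfolding d_def by (elim dvdE)
  ultimately have "F dvd d" using irreducibleD[OF irr] by (metis dvd_mult_unit_iff dvd_refl)
  then have "F dvd p" unfolding d_def using dvd_trans gcd_dvd2 by blast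
  then show ?thesis using \<open>p \<noteq> 0\<close> by (rule dvd_imp_degree_le)
qed

locale irreducible_root =
  fixes f :: "int poly" and \<alpha> :: complex
  assumes irreducible: "irreducible (map_poly of_int f :: rat poly)"
    and root: "poly (map_poly of_int f) \<alpha> = 0"
begin

lemma nonzero: "f \<noteq> 0"
  using irreducible by auto

lemma degree_pos: "degree f > 0"
  using irreducible
    by (metis degree_map_poly irreducible_def is_unit_iff_degree of_int_eq_0_iff gr0I)

lemma root_in_roots: "\<alpha> \<in> int_poly_roots f"
  using root by (simp add: int_poly_roots_def)

lemma degree_le_annihilating:
  assumes "\<gamma> \<in> int_poly_roots f" "poly_over \<rat> p" "p \<noteq> 0" "poly p \<gamma> = 0"
  shows "degree f \<le> degree p"
proof -
  obtain q where q: "p = map_poly of_rat q" using assms(2) poly_over_Rats_iff by blast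
  have "q \<noteq> 0" using assms(3) q by auto
  moreover have "poly (map_poly of_rat (map_poly of_int f :: rat poly)) \<gamma> = 0"
    using assms(1) by (simp add: int_poly_roots_def map_poly_map_poly o_def)
  ultimately have "degree (map_poly of_int f :: rat poly) \<le> degree q"
    using irreducible_degree_le[OF irreducible] assms(4) q by blast
  then show ?thesis using q by (simp add: degree_map_poly)
qed

lemma root_nonzero: "degree f \<ge> 2 \<Longrightarrow> \<alpha> \<noteq> 0"
  using degree_le_annihilating[OF root_in_roots poly_over_X[OF complex_subfield_Rats]] by fastforce

lemma minimal_poly_root: "\<gamma> \<in> int_poly_roots f \<Longrightarrow> minimal_poly \<rat> \<gamma> (map_poly of_int f)"
  using degree_le_annihilating nonzero
  by unfold_locales
    (auto simp: complex_subfield_Rats poly_over_of_int map_poly_of_int_eq_0_iff int_poly_roots_def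
      degree_map_poly)

lemma rsquarefree: "rsquarefree (map_poly of_int f :: complex poly)"
  unfolding rsquarefree_roots
proof (intro allI notI)
  fix a :: complex
  assume a: "poly (map_poly of_int f) a = 0 \<and> poly (pderiv (map_poly of_int f)) a = 0"
  have "pderiv (map_poly of_int f) \<noteq> (0 :: complex poly)"
    using degree_pos by (simp add: pderiv_eq_0_iff degree_map_poly)
  moreover have "poly_over \<rat> (pderiv (map_poly of_int f))"
    unfolding poly_over_def coeff_pderiv by (simp add: coeff_map_poly)
  ultimately have "degree f \<le> degree (pderiv (map_poly of_int f :: complex poly))"
    using a by (intro degree_le_annihilating) (auto simp: int_poly_roots_def)
  then show False using degree_pos by (simp add: degree_pderiv degree_map_poly)
qed

lemma card_roots: "card (int_poly_roots f) = degree f"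
proof -
  let ?p = "map_poly of_int f :: complex poly"
  have "?p = smult (lead_coeff ?p) (\<Prod>z | poly ?p z = 0. [:-z, 1:])"
    by (rule complex_poly_decompose_rsquarefree[OF rsquarefree, symmetric])
  then have "degree ?p = degree (\<Prod>z | poly ?p z = 0. [:-z, 1:])"
    using nonzero by (metis degree_smult_eq leading_coeff_0_iff map_poly_of_int_eq_0_iff)
  also have "\<dots> = card {z. poly ?p z = 0}"
    by (subst degree_prod_sum_eq) simp_all
  finally show ?thesis by (simp add: int_poly_roots_def degree_map_poly)
qed

lemma complex_subfield_adjoin_root: "complex_subfield (adjoin \<rat> \<alpha>)"
  using minimal_poly.complex_subfield_adjoin[OF minimal_poly_root[OF root_in_roots]] .

lemma adjoin_root_subset: "adjoin \<rat> \<alpha> \<subseteq> splitting_field f"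
  using adjoin_subset[OF complex_subfield_splitting_field]
    subfield_Rats[OF complex_subfield_splitting_field]
    root_in_roots roots_subset_splitting_field by blast

lemma field_aut_exists:
  assumes "\<delta> \<in> int_poly_roots f"
  obtains \<sigma> where "\<sigma> \<in> field_auts (splitting_field f)" "\<sigma> \<alpha> = \<delta>"
proof -
  interpret \<alpha>: minimal_poly \<rat> \<alpha> "map_poly of_int f" using minimal_poly_root[OF root_in_roots] .
  have "subfield_hom \<rat> id" by unfold_locales (simp_all add: complex_subfield_Rats)
  moreover have "poly (map_poly id (map_poly of_int f)) \<delta> = 0" using assms
    by (simp add: int_poly_roots_def)
  ultimately obtain \<Psi> where "subfield_hom (adjoin \<rat> \<alpha>) \<Psi>" "\<Psi> \<alpha> = \<delta>" by (rule \<alpha>.extend_hom)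
  then show thesis
    using extend_hom_field_aut[OF nonzero complex_subfield_adjoin_root adjoin_root_subset] that
      generator_in_adjoin[OF complex_subfield_Rats] by metis
qed

lemma field_aut_fixing_root_exists:
  assumes \<gamma>: "\<gamma> \<in> int_poly_roots f" "\<gamma> \<notin> adjoin \<rat> \<alpha>"
  obtains \<sigma> where "\<sigma> \<in> field_auts (splitting_field f)" "\<sigma> \<alpha> = \<alpha>" "\<sigma> \<gamma> \<noteq> \<gamma>"
proof -
  let ?A = "adjoin \<rat> \<alpha>"
  have A: "complex_subfield ?A" by (fact complex_subfield_adjoin_root)
  obtain \<mu> where "minimal_poly ?A \<gamma> \<mu>"
    using minimal_poly_exists[OF A poly_over_of_int[OF A]] \<gamma>(1) nonzero
    by (auto simp: int_poly_roots_def map_poly_of_int_eq_0_iff)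
  then interpret \<gamma>: minimal_poly ?A \<gamma> \<mu> .
  have "degree \<mu> \<ge> 2"
    using \<gamma>.degree_minpoly_pos \<gamma>.root_in_subfield \<gamma>(2) by fastforce
  moreover have "\<mu> dvd map_poly of_int f"
  proof -
    obtain s where "map_poly of_int f = s * \<mu>"
      by (rule \<gamma>.minpoly_dvd[OF poly_over_of_int[OF A]])
        (use \<gamma>(1) in \<open>simp add: int_poly_roots_def\<close>)
    then show ?thesis by simp
  qed
  ultimately obtain \<gamma>' where "\<gamma>' \<noteq> \<gamma>" "poly \<mu> \<gamma>' = 0"
    using rsquarefree_dvd_other_root[OF rsquarefree] \<gamma>.minpoly_root by metis
  moreover have "subfield_hom ?A id" by unfold_locales (simp_all add: A)
  ultimately obtain \<Psi> where \<Psi>: "subfield_hom (adjoin ?A \<gamma>) \<Psi>" "\<And>x. x \<in> ?A \<Longrightarrow> \<Psi> x = x" "\<Psi> \<gamma> = \<gamma>'"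
    using \<gamma>.extend_hom[of id \<gamma>'] by auto
  have "adjoin ?A \<gamma> \<subseteq> splitting_field f"
    using adjoin_subset complex_subfield_splitting_field adjoin_root_subset \<gamma>(1)
      roots_subset_splitting_field by blast
  then obtain \<sigma> where \<sigma>: "\<sigma> \<in> field_auts (splitting_field f)" "\<And>x. x \<in> adjoin ?A \<gamma> \<Longrightarrow> \<sigma> x = \<Psi> x"
    using extend_hom_field_aut[OF nonzero \<gamma>.complex_subfield_adjoin _ \<Psi>(1)] by blast
  have "\<sigma> \<alpha> = \<alpha>"
    using \<sigma>(2) \<Psi>(2) subset_adjoin[OF A, of \<gamma>] generator_in_adjoin[OF complex_subfield_Rats, of \<alpha>]
      by auto
  moreover have "\<sigma> \<gamma> \<noteq> \<gamma>" using \<sigma>(2)[OF generator_in_adjoin[OF A]] \<Psi>(3) \<open>\<gamma>' \<noteq> \<gamma>\<close> by simp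
  ultimately show thesis using that \<sigma>(1) by blast
qed

end

locale galois_root = irreducible_root +
  assumes card_field_auts: "card (field_auts (splitting_field f)) = degree f"
begin

lemma inj_on_eval_root: "inj_on (\<lambda>\<sigma>. \<sigma> \<alpha>) (field_auts (splitting_field f))"
proof (rule eq_card_imp_inj_on)
  show "finite (field_auts (splitting_field f))"
    using card_field_auts degree_pos card.infinite by fastforce
  have "(\<lambda>\<sigma>. \<sigma> \<alpha>) ` field_auts (splitting_field f) = int_poly_roots f"
    using field_aut_maps_roots[OF _ root_in_roots] field_aut_exists by (auto simp: image_iff) metis
  then show "card ((\<lambda>\<sigma>. \<sigma> \<alpha>) ` field_auts (splitting_field f)) =
      card (field_auts (splitting_field f))"
    by (simp add: card_roots card_field_auts)
qed

lemma field_aut_eqI: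
  "\<sigma> \<in> field_auts (splitting_field f) \<Longrightarrow> \<tau> \<in> field_auts (splitting_field f) \<Longrightarrow> \<sigma> \<alpha> = \<tau> \<alpha> \<Longrightarrow> \<sigma> = \<tau>"
  using inj_on_eval_root by (auto dest: inj_onD)

lemma splitting_field_eq_adjoin: "splitting_field f = adjoin \<rat> \<alpha>"
proof -
  have "\<gamma> \<in> adjoin \<rat> \<alpha>" if \<gamma>: "\<gamma> \<in> int_poly_roots f" for \<gamma>
  proof (rule ccontr)
    assume "\<gamma> \<notin> adjoin \<rat> \<alpha>"
    then obtain \<sigma> where \<sigma>: "\<sigma> \<in> field_auts (splitting_field f)" "\<sigma> \<alpha> = \<alpha>" "\<sigma> \<gamma> \<noteq> \<gamma>"
      using field_aut_fixing_root_exists \<gamma> by blast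
    have "\<alpha> \<in> splitting_field f" "\<gamma> \<in> splitting_field f"
      using root_in_roots \<gamma> roots_subset_splitting_field by blast+
    then have "\<sigma> = restrict id (splitting_field f)"
      using field_aut_eqI[OF \<sigma>(1) id_field_aut[OF nonzero]] \<sigma>(2) by simp
    then show False using \<sigma>(3) \<open>\<gamma> \<in> splitting_field f\<close> by simp
  qed
  then show ?thesis
    using splitting_field_least[OF complex_subfield_adjoin_root] adjoin_root_subset by blast
qed

end

section \<open>The dihedral group\<close>

lemma dihedral_group_mult [simp]:
  "(a, x) \<otimes>\<^bsub>dihedral_group m\<^esub> (b, y) = ((a + (if x then - b else b)) mod int m, x \<noteq> y)"
  by (simp add: dihedral_group_def)

lemma dihedral_group_one [simp]: "\<one>\<^bsub>dihedral_group m\<^esub> = (0, False)"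
  by (simp add: dihedral_group_def)

lemma carrier_dihedral_group [simp]: "carrier (dihedral_group m) = {0..<int m} \<times> UNIV"
  by (simp add: dihedral_group_def)

lemma card_carrier_dihedral_group: "card (carrier (dihedral_group m)) = 2 * m"
  by (simp add: card_cartesian_product)

lemma group_dihedral_group:
  assumes "m > 0"
  shows "group (dihedral_group m)"
proof (rule groupI)
  fix x y z
  show "x \<otimes>\<^bsub>dihedral_group m\<^esub> y \<otimes>\<^bsub>dihedral_group m\<^esub> z =
      x \<otimes>\<^bsub>dihedral_group m\<^esub> (y \<otimes>\<^bsub>dihedral_group m\<^esub> z)"
    by (cases x; cases y; cases z) (auto simp: mod_simps algebra_simps)
next
  fix x assume x: "x \<in> carrier (dihedral_group m)"
  obtain a s where [simp]: "x = (a, s)" by (cases x)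
  show "\<exists>y\<in>carrier (dihedral_group m). y \<otimes>\<^bsub>dihedral_group m\<^esub> x = \<one>\<^bsub>dihedral_group m\<^esub>"
    using x assms by (intro bexI[of _ "(if s then a else (- a) mod int m, s)"])
      (auto simp: mod_simps)
qed (use assms in \<open>auto\<close>)

lemma dihedral_rotation_pow:
  "(c, False) [^]\<^bsub>dihedral_group m\<^esub> k = ((int k * c) mod int m, False)"
  by (induction k) (simp_all add: mod_simps algebra_simps)

lemma dihedral_involution_is_reflection:
  assumes "odd m" "(a, s) \<in> carrier (dihedral_group m)"
    and "(a, s) \<otimes>\<^bsub>dihedral_group m\<^esub> (a, s) = \<one>\<^bsub>dihedral_group m\<^esub>"
    and "(a, s) \<noteq> \<one>\<^bsub>dihedral_group m\<^esub>"
  shows s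
proof (rule ccontr)
  assume "\<not> s"
  then have "int m dvd 2 * a" using assms(3) by (simp add: mod_eq_0_iff_dvd)
  moreover have "coprime (int m) 2" using assms(1) by simp
  ultimately have "int m dvd a" using coprime_dvd_mult_right_iff by blast
  then have "a = 0" using assms(2) by (auto dest: zdvd_imp_le)
  then show False using assms(4) \<open>\<not> s\<close> by simp
qed

lemma iso_group_imp_group:
  assumes "monoid G" "group H" "h \<in> iso G H"
  shows "group G"
proof -
  interpret G: monoid G by fact
  interpret H: group H by fact
  have hom: "h (x \<otimes>\<^bsub>G\<^esub> y) = h x \<otimes>\<^bsub>H\<^esub> h y" if "x \<in> carrier G" "y \<in> carrier G" for x y
    using assms(3) that by (simp add: iso_def hom_def)
  have bij: "bij_betw h (carrier G) (carrier H)" using assms(3) by (simp add: iso_def)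
  have closed: "h x \<in> carrier H" if "x \<in> carrier G" for x using bij that by (rule bij_betw_apply)
  have "h \<one>\<^bsub>G\<^esub> \<otimes>\<^bsub>H\<^esub> h \<one>\<^bsub>G\<^esub> = h \<one>\<^bsub>G\<^esub>"
    using hom[of "\<one>\<^bsub>G\<^esub>" "\<one>\<^bsub>G\<^esub>"] by simp
  then have one: "h \<one>\<^bsub>G\<^esub> = \<one>\<^bsub>H\<^esub>" using closed by simp
  show ?thesis
  proof (rule G.group_l_invI)
    fix x assume x: "x \<in> carrier G"
    obtain y where y: "y \<in> carrier G" "h y = inv\<^bsub>H\<^esub> h x"
      using bij_betw_imp_surj_on[OF bij] H.inv_closed[OF closed[OF x]] by (metis imageE)
    have "h (y \<otimes>\<^bsub>G\<^esub> x) = h \<one>\<^bsub>G\<^esub>" using hom[OF y(1) x] y(2) one closed[OF x] by simp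
    then have "y \<otimes>\<^bsub>G\<^esub> x = \<one>\<^bsub>G\<^esub>" using bij_betw_imp_inj_on[OF bij] x y(1) by (auto dest: inj_onD)
    then show "\<exists>y\<in>carrier G. y \<otimes>\<^bsub>G\<^esub> x = \<one>\<^bsub>G\<^esub>" using y(1) by blast
  qed
qed

lemma (in group) dihedral_iso_involution_product:
  assumes iso: "h \<in> iso G (dihedral_group m)" and m: "odd m" "m \<ge> 3"
    and \<rho>: "\<rho> \<in> carrier G" "\<rho> \<otimes> \<rho> = \<one>" "\<rho> \<noteq> \<one>"
  obtains \<tau> where "\<tau> \<in> carrier G" "\<tau> \<otimes> \<tau> = \<one>"
    "(\<rho> \<otimes> \<tau>) \<otimes> (\<rho> \<otimes> \<tau>) \<noteq> \<one>" "((\<rho> \<otimes> \<tau>) \<otimes> (\<rho> \<otimes> \<tau>)) [^] m = \<one>"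
proof -
  let ?D = "dihedral_group m"
  interpret D: group ?D using m by (intro group_dihedral_group) simp
  interpret h: group_hom G ?D h using iso by (unfold_locales) (simp add: iso_def)
  have bij: "bij_betw h (carrier G) (carrier ?D)" using iso by (simp add: iso_def)
  have h_eq_one: "x = \<one>" if "x \<in> carrier G" "h x = \<one>\<^bsub>?D\<^esub>" for x
    using that bij_betw_imp_inj_on[OF bij] by (auto dest: inj_onD[of _ _ x \<one>])
  obtain a s where ha: "h \<rho> = (a, s)" by (cases "h \<rho>")
  have s
  proof (rule dihedral_involution_is_reflection[OF m(1)])
    show "(a, s) \<in> carrier ?D" using ha \<rho>(1) by (metis h.hom_closed)
    show "(a, s) \<otimes>\<^bsub>?D\<^esub> (a, s) = \<one>\<^bsub>?D\<^esub>" using ha \<rho> by (metis h.hom_mult h.hom_one)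
    show "(a, s) \<noteq> \<one>\<^bsub>?D\<^esub>" using ha \<rho> h_eq_one by metis
  qed
  have "((a + 1) mod int m, True) \<in> h ` carrier G"
    using bij_betw_imp_surj_on[OF bij] m by simp
  then obtain \<tau> where \<tau>: "\<tau> \<in> carrier G" "h \<tau> = ((a + 1) mod int m, True)"
    by (metis imageE)
  have hr: "h ((\<rho> \<otimes> \<tau>) \<otimes> (\<rho> \<otimes> \<tau>)) = ((- 2) mod int m, False)"
    using \<rho>(1) \<tau> ha \<open>s\<close> by (simp add: mod_simps)
  show thesis
  proof
    show "\<tau> \<in> carrier G" by (fact \<tau>(1))
    show "\<tau> \<otimes> \<tau> = \<one>" using \<tau> by (intro h_eq_one) (auto simp: mod_simps)
    have "(- 2) mod int m \<noteq> 0" using m(2) by (auto simp: mod_eq_0_iff_dvd dest: zdvd_imp_le)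
    then show "(\<rho> \<otimes> \<tau>) \<otimes> (\<rho> \<otimes> \<tau>) \<noteq> \<one>" using hr by auto
    have "h (((\<rho> \<otimes> \<tau>) \<otimes> (\<rho> \<otimes> \<tau>)) [^] m) = ((- 2) mod int m, False) [^]\<^bsub>?D\<^esub> m"
      using \<rho>(1) \<tau>(1) hr by (simp add: h.hom_nat_pow)
    also have "\<dots> = \<one>\<^bsub>?D\<^esub>" by (simp add: dihedral_rotation_pow mod_simps)
    finally show "((\<rho> \<otimes> \<tau>) \<otimes> (\<rho> \<otimes> \<tau>)) [^] m = \<one>" using \<rho>(1) \<tau>(1) h_eq_one by simp
  qed
qed

section \<open>Endomorphisms of Z[alpha] congruent to the identity modulo 2\<close>

lemma int_adjoin_iff: "x \<in> int_adjoin \<alpha> \<longleftrightarrow> (\<exists>p. x = poly (map_poly of_int p) \<alpha>)"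
  by (auto simp: int_adjoin_def)

lemma int_adjoin_add: "x \<in> int_adjoin \<alpha> \<Longrightarrow> y \<in> int_adjoin \<alpha> \<Longrightarrow> x + y \<in> int_adjoin \<alpha>"
  and int_adjoin_diff: "x \<in> int_adjoin \<alpha> \<Longrightarrow> y \<in> int_adjoin \<alpha> \<Longrightarrow> x - y \<in> int_adjoin \<alpha>"
  and int_adjoin_mult: "x \<in> int_adjoin \<alpha> \<Longrightarrow> y \<in> int_adjoin \<alpha> \<Longrightarrow> x * y \<in> int_adjoin \<alpha>"
  unfolding int_adjoin_iff
  by (metis map_poly_of_int_add poly_add, metis map_poly_of_int_diff poly_diff,
      metis map_poly_of_int_mult poly_mult)

lemma of_int_in_int_adjoin: "of_int k \<in> int_adjoin \<alpha>"
  unfolding int_adjoin_iff by (intro exI[of _ "[:k:]"]) (simp add: map_poly_pCons)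

lemma generator_in_int_adjoin: "\<alpha> \<in> int_adjoin \<alpha>"
  unfolding int_adjoin_iff by (intro exI[of _ "[:0, 1:]"]) (simp add: map_poly_pCons)

lemma int_adjoin_scale: "x \<in> int_adjoin \<alpha> \<Longrightarrow> of_int k * x \<in> int_adjoin \<alpha>"
  by (rule int_adjoin_mult[OF of_int_in_int_adjoin])

lemma poly_in_int_adjoin: "z \<in> int_adjoin \<alpha> \<Longrightarrow> poly (map_poly of_int q) z \<in> int_adjoin \<alpha>"
  by (induction q) (simp_all add: map_poly_pCons int_adjoin_add int_adjoin_mult of_int_in_int_adjoin
      of_int_in_int_adjoin[of 0, simplified])

lemma rat_adjoin_eq_adjoin: "rat_adjoin \<alpha> = adjoin \<rat> \<alpha>"
  unfolding rat_adjoin_def adjoin_def poly_over_Rats_iff by blast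

lemma poly_of_int_uminus_congruent:
  "\<exists>q. poly (map_poly (of_int :: int \<Rightarrow> complex) p) (- a) - poly (map_poly of_int p) a =
     2 * poly (map_poly of_int q) a"
proof (induction p)
  case (pCons c p)
  then obtain q where q:
    "poly (map_poly (of_int :: int \<Rightarrow> complex) p) (- a) - poly (map_poly of_int p) a
     = 2 * poly (map_poly of_int q) a" by blast
  have minus:
    "map_poly (of_int :: int \<Rightarrow> complex) (- p - q) = - map_poly of_int p - map_poly of_int q"
    by (intro poly_eqI) (simp add: coeff_map_poly)
  have "poly (map_poly (of_int :: int \<Rightarrow> complex) (pCons c p)) (- a) -
      poly (map_poly of_int (pCons c p)) a
      = - a * (poly (map_poly of_int p) (- a) + poly (map_poly of_int p) a)"
    by (simp add: map_poly_pCons algebra_simps)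
  also have "\<dots> = 2 * poly (map_poly of_int (pCons 0 (- p - q))) a"
    using q by (simp add: map_poly_pCons minus algebra_simps)
  finally show ?case by blast
qed (intro exI[of _ 0], simp)

lemma poly_over_Rats_clear_denominators:
  "poly_over \<rat> p \<Longrightarrow> \<exists>D q. D > (0::int) \<and> smult (of_int D) p = map_poly of_int q"
proof (induction p)
  case (pCons c p)
  then have "c \<in> \<rat>" "poly_over \<rat> p" by (simp_all add: poly_over_pCons_iff)
  from pCons.IH[OF this(2)] obtain D q where Dq: "D > 0" "smult (of_int D) p = map_poly of_int q"
    by blast
  from \<open>c \<in> \<rat>\<close> obtain a b where ab: "b > 0" "c = of_int a / of_int b" by (elim Rats_cases')
  have "smult (of_int (b * D)) (pCons c p) = map_poly of_int (pCons (a * D) (smult b q))"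
    using ab Dq(2)[symmetric] by (simp add: map_poly_pCons map_poly_smult field_simps)
  then show ?case using ab Dq by (intro exI[of _ "b * D"]) auto
qed (auto intro: exI[of _ 1] exI[of _ 0])

definition congruent_id_mod_2 :: "complex set \<Rightarrow> (complex \<Rightarrow> complex) \<Rightarrow> bool" where
  "congruent_id_mod_2 Z \<sigma> \<longleftrightarrow> (\<forall>x\<in>Z. \<exists>y\<in>Z. \<sigma> x - x = 2 * y)"

lemma congruent_id_mod_2_comp:
  assumes "\<And>x y. x \<in> Z \<Longrightarrow> y \<in> Z \<Longrightarrow> x + y \<in> Z" "\<And>x. x \<in> Z \<Longrightarrow> r x \<in> Z"
    and "congruent_id_mod_2 Z \<sigma>" "congruent_id_mod_2 Z r"
  shows "congruent_id_mod_2 Z (\<sigma> \<circ> r)"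
  unfolding congruent_id_mod_2_def
proof
  fix x assume "x \<in> Z"
  then obtain y y' where "y \<in> Z" "r x - x = 2 * y" "y' \<in> Z" "\<sigma> (r x) - r x = 2 * y'"
    using assms(2-4) by (meson congruent_id_mod_2_def)
  then show "\<exists>y\<in>Z. (\<sigma> \<circ> r) x - x = 2 * y"
    using assms(1) by (intro bexI[of _ "y' + y"]) (auto simp: algebra_simps)
qed

locale int_linear_endo =
  fixes Z :: "complex set" and r :: "complex \<Rightarrow> complex"
  assumes add_closed: "x \<in> Z \<Longrightarrow> y \<in> Z \<Longrightarrow> x + y \<in> Z"
    and scale_closed: "x \<in> Z \<Longrightarrow> of_int k * x \<in> Z"
    and maps_to: "x \<in> Z \<Longrightarrow> r x \<in> Z"
    and additive: "x \<in> Z \<Longrightarrow> y \<in> Z \<Longrightarrow> r (x + y) = r x + r y"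
    and homogeneous: "x \<in> Z \<Longrightarrow> r (of_int k * x) = of_int k * r x"
begin

lemma funpow_congruence:
  assumes "J > 0" and E: "\<And>x. x \<in> Z \<Longrightarrow> E x \<in> Z \<and> r x = x + 2 ^ J * E x" and x: "x \<in> Z"
  shows "\<exists>w\<in>Z. (r ^^ k) x = x + of_int (int k * 2 ^ J) * E x + 2 ^ (J + 1) * w"
proof (induction k)
  case 0
  show ?case using scale_closed[OF x, of 0] by (intro bexI[of _ 0]) simp_all
next
  case (Suc k)
  then obtain w where w: "w \<in> Z" "(r ^^ k) x = x + of_int (int k * 2 ^ J) * E x + 2 ^ (J + 1) * w"
    by blast
  have Ex: "E x \<in> Z" using E[OF x] by simp
  have in_Z: "of_int (int k * 2 ^ J) * E x \<in> Z" "2 ^ (J + 1) * w \<in> Z"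
    using scale_closed[OF Ex, of "int k * 2 ^ J"] scale_closed[OF w(1), of "2 ^ (J + 1)"]
      by simp_all
  have "(r ^^ Suc k) x = r x + r (of_int (int k * 2 ^ J) * E x) + r (2 ^ (J + 1) * w)"
    using w(2) additive[OF add_closed[OF x in_Z(1)] in_Z(2)] additive[OF x in_Z(1)] by simp
  also have "r (2 ^ (J + 1) * w) = 2 ^ (J + 1) * r w"
    using homogeneous[OF w(1), of "2 ^ (J + 1)"] by simp
  also have "r (of_int (int k * 2 ^ J) * E x) = of_int (int k * 2 ^ J) * (E x + 2 ^ J * E (E x))"
    using E[OF Ex] by (simp only: homogeneous[OF Ex])
  also have "r x = x + 2 ^ J * E x" using E[OF x] by simp
  finally have "(r ^^ Suc k) x = x + of_int (int (Suc k) * 2 ^ J) * E x +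
      2 ^ (J + 1) * (of_int (int k * 2 ^ (J - 1)) * E (E x) + r w)"
    using \<open>J > 0\<close> by (cases J) (simp_all add: algebra_simps power_add)
  moreover have "of_int (int k * 2 ^ (J - 1)) * E (E x) + r w \<in> Z"
    using E[OF Ex] by (intro add_closed scale_closed maps_to w(1)) simp
  ultimately show ?case by blast
qed

lemma congruence_step:
  assumes "odd m" and r_pow: "\<And>x. x \<in> Z \<Longrightarrow> (r ^^ m) x = x" and "J > 0"
    and cong: "\<And>x. x \<in> Z \<Longrightarrow> \<exists>y\<in>Z. r x - x = 2 ^ J * y" and "x \<in> Z"
  shows "\<exists>y\<in>Z. r x - x = 2 ^ (J + 1) * y"
proof -
  define E where "E x = (SOME y. y \<in> Z \<and> r x - x = 2 ^ J * y)" for x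
  have E: "E x \<in> Z \<and> r x = x + 2 ^ J * E x" if "x \<in> Z" for x
  proof -
    have "\<exists>y. y \<in> Z \<and> r x - x = 2 ^ J * y" using cong[OF that] by blast
    then have "E x \<in> Z \<and> r x - x = 2 ^ J * E x" unfolding E_def by (rule someI_ex)
    then show ?thesis by (metis add.commute diff_eq_eq)
  qed
  obtain w where w: "w \<in> Z" "(r ^^ m) x = x + of_int (int m * 2 ^ J) * E x + 2 ^ (J + 1) * w"
    using funpow_congruence[OF \<open>J > 0\<close> E \<open>x \<in> Z\<close>] by blast
  then have "2 ^ J * (of_nat m * E x + 2 * w) = 0" using r_pow[OF \<open>x \<in> Z\<close>]
    by (simp add: algebra_simps)
  then have mE: "of_nat m * E x = - 2 * w" by (simp add: add_eq_0_iff2)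
  obtain l where l: "m = 2 * l + 1" using \<open>odd m\<close> oddE by blast
  \<comment> \<open>since \<open>m\<close> is odd, \<open>E x = m E x - 2 l E x\<close> is even\<close>
  have "E x = 2 * (of_int (- 1) * w + of_int (- int l) * E x)"
    using mE l by (simp add: algebra_simps)
  moreover have "of_int (- 1) * w + of_int (- int l) * E x \<in> Z"
    using E[OF \<open>x \<in> Z\<close>] w(1) by (intro add_closed scale_closed) simp_all
  ultimately show ?thesis using E[OF \<open>x \<in> Z\<close>]
    by (metis add_diff_cancel_left' mult.assoc power_add power_one_right)
qed

lemma congruent_id_mod_pow2:
  assumes "odd m" "\<And>x. x \<in> Z \<Longrightarrow> (r ^^ m) x = x" "congruent_id_mod_2 Z r" "x \<in> Z"
  shows "\<exists>y\<in>Z. r x - x = 2 ^ Suc j * y"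
  using assms(4)
proof (induction j arbitrary: x)
  case 0
  then show ?case using assms(3) by (simp add: congruent_id_mod_2_def)
next
  case (Suc j)
  then show ?case using congruence_step[OF assms(1,2), of "Suc j"] by simp
qed

lemma congruent_id_mod_2_conj:
  assumes "congruent_id_mod_2 Z \<rho>" "\<And>x. x \<in> Z \<Longrightarrow> r (r x) = x"
  shows "congruent_id_mod_2 Z (r \<circ> \<rho> \<circ> r)"
  unfolding congruent_id_mod_2_def
proof
  fix x assume "x \<in> Z"
  then obtain y where y: "y \<in> Z" "\<rho> (r x) = r x + 2 * y"
    using assms(1) maps_to by (force simp: congruent_id_mod_2_def algebra_simps)
  then have "(r \<circ> \<rho> \<circ> r) x - x = 2 * r y"
    using additive[OF maps_to[OF \<open>x \<in> Z\<close>] scale_closed[OF y(1), of 2]] homogeneous[OF y(1), of 2]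
      assms(2)[OF \<open>x \<in> Z\<close>] by simp
  then show "\<exists>y\<in>Z. (r \<circ> \<rho> \<circ> r) x - x = 2 * y" using maps_to[OF y(1)] by blast
qed

end

section \<open>Monogenic polynomials with Galois group of order their degree\<close>

locale monogenic_galois_root = galois_root +
  assumes monic: "lead_coeff f = 1"
    and int_adjoin_eq: "int_adjoin \<alpha> = {x \<in> rat_adjoin \<alpha>. algebraic_int x}"
begin

lemma int_adjoin_subset: "int_adjoin \<alpha> \<subseteq> splitting_field f"
  using int_adjoin_eq splitting_field_eq_adjoin rat_adjoin_eq_adjoin by auto

lemma field_aut_int_adjoin:
  assumes "\<sigma> \<in> field_auts (splitting_field f)" "x \<in> int_adjoin \<alpha>"
  shows "\<sigma> x \<in> int_adjoin \<alpha>"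
proof -
  interpret \<sigma>: subfield_hom "splitting_field f" \<sigma>
    using complex_subfield_splitting_field assms(1) by (rule subfield_hom_field_aut)
  have "\<sigma> \<alpha> \<in> int_poly_roots f" by (rule field_aut_maps_roots[OF assms(1) root_in_roots])
  then have "algebraic_int (\<sigma> \<alpha>)" "\<sigma> \<alpha> \<in> splitting_field f"
    using monic roots_subset_splitting_field algebraic_int_altdef_ipoly
      by (auto simp: int_poly_roots_def)
  then have "\<sigma> \<alpha> \<in> int_adjoin \<alpha>"
    using int_adjoin_eq splitting_field_eq_adjoin rat_adjoin_eq_adjoin by auto
  moreover obtain p where "x = poly (map_poly of_int p) \<alpha>" using assms(2) int_adjoin_iff by blast
  then have "\<sigma> x = poly (map_poly of_int p) (\<sigma> \<alpha>)"
    using \<sigma>.hom_poly_Rats[OF poly_over_of_int[OF complex_subfield_Rats]] root_in_roots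
      roots_subset_splitting_field by blast
  ultimately show ?thesis using poly_in_int_adjoin by simp
qed

lemma int_linear_endo_field_aut:
  assumes "\<sigma> \<in> field_auts (splitting_field f)"
  shows "int_linear_endo (int_adjoin \<alpha>) \<sigma>"
proof -
  interpret \<sigma>: subfield_hom "splitting_field f" \<sigma>
    using complex_subfield_splitting_field assms by (rule subfield_hom_field_aut)
  show ?thesis
    using subsetD[OF int_adjoin_subset] \<sigma>.hom_add \<sigma>.hom_mult \<sigma>.hom_of_int
      subfield_of_int[OF complex_subfield_splitting_field]
    by unfold_locales (auto intro: int_adjoin_add int_adjoin_scale field_aut_int_adjoin[OF assms])
qed

lemma int_adjoin_pow2_divisible_eq_0:
  assumes z: "z \<in> int_adjoin \<alpha>" and divisible: "\<And>j. \<exists>w\<in>int_adjoin \<alpha>. z = 2 ^ j * w"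
  shows "z = 0"
proof (rule ccontr)
  assume "z \<noteq> 0"
  \<comment> \<open>with \<open>D\<close> a common denominator of \<open>1 / z\<close> and \<open>z = 2 ^ j * w\<close>, the rational number
    \<open>D / 2 ^ j = w * (D / z)\<close> lies in \<open>Z[\<alpha>]\<close>; take \<open>j = D\<close>\<close>
  have "inverse z \<in> adjoin \<rat> \<alpha>"
    using subfield_inverse[OF complex_subfield_splitting_field] int_adjoin_subset z
      splitting_field_eq_adjoin
    by auto
  then obtain p where p: "poly_over \<rat> p" "inverse z = poly p \<alpha>" unfolding adjoin_def by blast
  obtain D q where Dq: "D > 0" "smult (of_int D) p = map_poly of_int q"
    using poly_over_Rats_clear_denominators[OF p(1)] by blast
  have "of_int D * inverse z \<in> int_adjoin \<alpha>"
    unfolding int_adjoin_iff p(2) using Dq(2) by (metis poly_smult)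
  moreover obtain w where w: "w \<in> int_adjoin \<alpha>" "z = 2 ^ nat D * w" using divisible by blast
  ultimately have "w * (of_int D * inverse z) \<in> int_adjoin \<alpha>" using int_adjoin_mult by blast
  moreover have "w * (of_int D * inverse z) = of_int D / 2 ^ nat D"
    using w(2) \<open>z \<noteq> 0\<close> by (simp add: field_simps)
  ultimately have "algebraic_int (of_int D / 2 ^ nat D :: complex)" using int_adjoin_eq by auto
  then have "(of_int D / 2 ^ nat D :: complex) \<in> \<int>" by (rule rational_algebraic_int_is_int) simp
  then obtain k where "of_int D = (of_int (k * 2 ^ nat D) :: complex)"
    by (elim Ints_cases) (simp add: field_simps)
  then have "D = k * 2 ^ nat D" by (simp only: of_int_eq_iff)
  moreover have "D < 2 ^ nat D" using Dq(1)
    by (metis less_exp of_nat_less_iff int_nat_eq of_nat_numeral of_nat_power order_less_le)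
  ultimately show False using Dq(1) by (smt (verit) mult_le_cancel_right1 zero_less_mult_iff)
qed

lemma field_aut_eq_one_if_congruent_id_mod_2:
  fixes m :: nat
  assumes \<sigma>: "\<sigma> \<in> carrier (gal_group f)" and "odd m"
    and pow: "\<sigma> [^]\<^bsub>gal_group f\<^esub> m = \<one>\<^bsub>gal_group f\<^esub>"
    and cong: "congruent_id_mod_2 (int_adjoin \<alpha>) \<sigma>"
  shows "\<sigma> = \<one>\<^bsub>gal_group f\<^esub>"
proof -
  interpret \<sigma>: int_linear_endo "int_adjoin \<alpha>" \<sigma>
    using \<sigma> int_linear_endo_field_aut by (simp add: gal_group_def)
  have "(\<sigma> ^^ m) x = x" if "x \<in> int_adjoin \<alpha>" for x
    using gal_group_pow_apply[OF nonzero \<sigma>, of x m] pow that int_adjoin_subset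
      by (auto simp: gal_group_def)
  then have "\<exists>w\<in>int_adjoin \<alpha>. \<sigma> \<alpha> - \<alpha> = 2 ^ j * w" for j
    using \<sigma>.congruent_id_mod_pow2[OF \<open>odd m\<close> _ cong generator_in_int_adjoin, of j]
    by (metis int_adjoin_scale[of _ \<alpha> 2] mult.assoc of_int_numeral power_Suc2)
  then have "\<sigma> \<alpha> - \<alpha> = 0"
    by (intro int_adjoin_pow2_divisible_eq_0 int_adjoin_diff \<sigma>.maps_to generator_in_int_adjoin) auto
  then show ?thesis
    using field_aut_eqI[of \<sigma> "restrict id (splitting_field f)"] \<sigma> id_field_aut[OF nonzero]
      root_in_roots roots_subset_splitting_field[of f] by (auto simp: gal_group_def)
qed

lemma congruent_id_mod_2_negation:
  assumes "\<rho> \<in> field_auts (splitting_field f)" "\<rho> \<alpha> = - \<alpha>"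
  shows "congruent_id_mod_2 (int_adjoin \<alpha>) \<rho>"
  unfolding congruent_id_mod_2_def
proof
  fix x assume "x \<in> int_adjoin \<alpha>"
  interpret \<rho>: subfield_hom "splitting_field f" \<rho>
    using complex_subfield_splitting_field assms(1) by (rule subfield_hom_field_aut)
  obtain p where p: "x = poly (map_poly of_int p) \<alpha>" using \<open>x \<in> int_adjoin \<alpha>\<close> int_adjoin_iff
    by blast
  obtain q where q:
    "poly (map_poly of_int p) (- \<alpha>) - poly (map_poly of_int p) \<alpha> = 2 * poly (map_poly of_int q) \<alpha>"
    using poly_of_int_uminus_congruent by blast
  have "\<alpha> \<in> splitting_field f" using root_in_roots roots_subset_splitting_field by blast
  then have "\<rho> x = poly (map_poly of_int p) (- \<alpha>)"
    using \<rho>.hom_poly_Rats[OF poly_over_of_int[OF complex_subfield_Rats]] assms(2) p by simp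
  then show "\<exists>y\<in>int_adjoin \<alpha>. \<rho> x - x = 2 * y" using p q int_adjoin_iff by auto
qed

lemma negation_field_aut_involution:
  assumes \<rho>: "\<rho> \<in> carrier (gal_group f)" "\<rho> \<alpha> = - \<alpha>" and "\<alpha> \<noteq> 0"
  shows "\<rho> \<otimes>\<^bsub>gal_group f\<^esub> \<rho> = \<one>\<^bsub>gal_group f\<^esub>" "\<rho> \<noteq> \<one>\<^bsub>gal_group f\<^esub>"
proof -
  let ?K = "splitting_field f"
  interpret \<rho>: subfield_hom ?K \<rho>
    using complex_subfield_splitting_field \<rho>(1) by (simp add: subfield_hom_field_aut gal_group_def)
  have \<alpha>: "\<alpha> \<in> ?K" using root_in_roots roots_subset_splitting_field by blast
  have "compose ?K \<rho> \<rho> \<alpha> = restrict id ?K \<alpha>"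
    using \<alpha> \<rho>(2) \<rho>.hom_uminus by (simp add: compose_eq)
  then show "\<rho> \<otimes>\<^bsub>gal_group f\<^esub> \<rho> = \<one>\<^bsub>gal_group f\<^esub>"
    using field_aut_eqI compose_field_auts[OF nonzero] id_field_aut[OF nonzero] \<rho>(1)
    by (simp add: gal_group_def)
  show "\<rho> \<noteq> \<one>\<^bsub>gal_group f\<^esub>" using \<alpha> \<rho>(2) \<open>\<alpha> \<noteq> 0\<close> by (auto simp: gal_group_def)
qed

lemma congruent_id_mod_2_commutator:
  assumes \<rho>: "\<rho> \<in> carrier (gal_group f)" "\<rho> \<alpha> = - \<alpha>"
    and \<tau>: "\<tau> \<in> carrier (gal_group f)" "\<tau> \<otimes>\<^bsub>gal_group f\<^esub> \<tau> = \<one>\<^bsub>gal_group f\<^esub>"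
  shows "congruent_id_mod_2 (int_adjoin \<alpha>)
    ((\<rho> \<otimes>\<^bsub>gal_group f\<^esub> \<tau>) \<otimes>\<^bsub>gal_group f\<^esub> (\<rho> \<otimes>\<^bsub>gal_group f\<^esub> \<tau>))"
proof -
  interpret \<tau>: int_linear_endo "int_adjoin \<alpha>" \<tau>
    using \<tau>(1) int_linear_endo_field_aut by (simp add: gal_group_def)
  have \<rho>_Z: "\<rho> x \<in> int_adjoin \<alpha>" if "x \<in> int_adjoin \<alpha>" for x
    using field_aut_int_adjoin \<rho>(1) that by (simp add: gal_group_def)
  have K: "x \<in> splitting_field f" if "x \<in> int_adjoin \<alpha>" for x using int_adjoin_subset that by blast
  have "\<tau> (\<tau> x) = x" if "x \<in> int_adjoin \<alpha>" for x
    using \<tau>(2) K[OF that]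
      by (metis compose_eq gal_group_def monoid.select_convs(1,2) restrict_apply' id_apply)
  then have "congruent_id_mod_2 (int_adjoin \<alpha>) (\<rho> \<circ> (\<tau> \<circ> \<rho> \<circ> \<tau>))"
    using congruent_id_mod_2_negation \<rho>
    by (intro congruent_id_mod_2_comp[OF \<tau>.add_closed] \<tau>.congruent_id_mod_2_conj)
      (simp_all add: \<tau>.maps_to \<rho>_Z gal_group_def)
  moreover have "((\<rho> \<otimes>\<^bsub>gal_group f\<^esub> \<tau>) \<otimes>\<^bsub>gal_group f\<^esub> (\<rho> \<otimes>\<^bsub>gal_group f\<^esub> \<tau>)) x =
      (\<rho> \<circ> (\<tau> \<circ> \<rho> \<circ> \<tau>)) x" if "x \<in> int_adjoin \<alpha>" for x
    using K[OF that] K[OF \<tau>.maps_to[OF that]] K[OF \<rho>_Z[OF \<tau>.maps_to[OF that]]]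
    by (simp add: gal_group_def compose_eq)
  ultimately show ?thesis by (simp add: congruent_id_mod_2_def)
qed

lemma not_iso_dihedral:
  assumes "odd m" "m \<ge> 3" and neg_root: "poly (map_poly of_int f) (- \<alpha>) = 0"
  shows "\<not> gal_group f \<cong> dihedral_group m"
proof
  let ?G = "gal_group f"
  assume iso: "?G \<cong> dihedral_group m"
  then obtain h where h: "h \<in> iso ?G (dihedral_group m)" by (auto simp: is_iso_def)
  have "group (dihedral_group m)" using assms(2) by (intro group_dihedral_group) simp
  then interpret G: group ?G using iso_group_imp_group[OF monoid_gal_group[OF nonzero] _ h] by blast
  obtain \<rho> where \<rho>: "\<rho> \<in> carrier ?G" "\<rho> \<alpha> = - \<alpha>"
    using field_aut_exists neg_root by (auto simp: gal_group_def int_poly_roots_def)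
  have "degree f = 2 * m"
    using card_field_auts iso_same_card[OF iso]
      by (simp add: gal_group_def card_carrier_dihedral_group)
  then have "\<alpha> \<noteq> 0" using root_nonzero assms(2) by simp
  then have "\<rho> \<otimes>\<^bsub>?G\<^esub> \<rho> = \<one>\<^bsub>?G\<^esub>" "\<rho> \<noteq> \<one>\<^bsub>?G\<^esub>"
    using negation_field_aut_involution \<rho> by blast+
  then obtain \<tau> where \<tau>: "\<tau> \<in> carrier ?G" "\<tau> \<otimes>\<^bsub>?G\<^esub> \<tau> = \<one>\<^bsub>?G\<^esub>"
    and r: "(\<rho> \<otimes>\<^bsub>?G\<^esub> \<tau>) \<otimes>\<^bsub>?G\<^esub> (\<rho> \<otimes>\<^bsub>?G\<^esub> \<tau>) \<noteq> \<one>\<^bsub>?G\<^esub>"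
      "((\<rho> \<otimes>\<^bsub>?G\<^esub> \<tau>) \<otimes>\<^bsub>?G\<^esub> (\<rho> \<otimes>\<^bsub>?G\<^esub> \<tau>)) [^]\<^bsub>?G\<^esub> m = \<one>\<^bsub>?G\<^esub>"
    using G.dihedral_iso_involution_product[OF h assms(1,2) \<rho>(1)] by blast
  then show False
    using field_aut_eq_one_if_congruent_id_mod_2[OF _ assms(1) r(2)]
      congruent_id_mod_2_commutator[OF \<rho> \<tau>] \<rho>(1) \<tau>(1) by blast
qed

end

theorem lemma4p2:
  fixes m :: nat
  assumes "m \<ge> 3" and "odd m"
  shows "\<not> (\<exists>g :: int poly. lead_coeff g = 1 \<and> degree g = m \<and>
            irreducible (map_poly of_int (pcompose g [:0, 0, 1:]) :: rat poly) \<and>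
            monogenic (pcompose g [:0, 0, 1:]) \<and>
            gal_group (pcompose g [:0, 0, 1:]) \<cong> dihedral_group m)"
proof (intro notI, elim exE conjE)
  fix g :: "int poly"
  define f where "f = pcompose g [:0, 0, 1:]"
  assume "lead_coeff g = 1" "degree g = m"
    "irreducible (map_poly of_int (pcompose g [:0, 0, 1:]) :: rat poly)"
    "monogenic (pcompose g [:0, 0, 1:])" "gal_group (pcompose g [:0, 0, 1:]) \<cong> dihedral_group m"
  then have g: "lead_coeff g = 1" "degree g = m" "irreducible (map_poly of_int f :: rat poly)"
    "monogenic f" "gal_group f \<cong> dihedral_group m"
    by (simp_all add: f_def)
  obtain \<alpha> where root: "poly (map_poly of_int f) \<alpha> = (0 :: complex)"
    and ring_of_integers: "int_adjoin \<alpha> = {x \<in> rat_adjoin \<alpha>. algebraic_int x}"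
    using g(4) unfolding monogenic_def by blast
  have "card (field_auts (splitting_field f)) = degree f"
    using iso_same_card[OF g(5)] g(2)
    by (simp add: f_def gal_group_def card_carrier_dihedral_group degree_pcompose)
  then interpret monogenic_galois_root f \<alpha>
    using g(1,3) root ring_of_integers by unfold_locales (simp_all add: f_def lead_coeff_comp)
  have "poly (map_poly of_int f) (- \<alpha>) = (0 :: complex)"
    using root by (simp add: f_def poly_map_poly_of_int_pcompose map_poly_pCons)
  then show False using not_iso_dihedral assms g(5) by blast
qed

end
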